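(* Let $H$ be a graph that is not a trivial pattern. Then the triangle $K_3$ is a projection of $H$.
   Context: A graph $H$ is a trivial pattern if, after removing its isolated vertices, it is either a complete bipartite graph or has at most two edges. A graph $H'$ is a projection of $H$ if $H'$ can be obtained from $H$ by a sequence of vertex deletions and identifications of two nonadjacent vertices. *)

theory Defs
  imports Main
begin

definition graph :: "'a set \<Rightarrow> 'a set set \<Rightarrow> bool" where
  "graph V E \<longleftrightarrow> finite V \<and> (\<forall>e\<in>E. e \<subseteq> V \<and> card e = 2)"

definition adjacent :: "'a set set \<Rightarrow> 'a \<Rightarrow> 'a \<Rightarrow> bool" where
  "adjacent E u v \<longleftrightarrow> {u, v} \<in> E"

definition del_vertex :: "'a set \<Rightarrow> 'a set set \<Rightarrow> 'a \<Rightarrow> 'a set \<times> 'a set set" where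
  "del_vertex V E v = (V - {v}, {e \<in> E. v \<notin> e})"

definition identify :: "'a set \<Rightarrow> 'a set set \<Rightarrow> 'a \<Rightarrow> 'a \<Rightarrow> 'a set \<times> 'a set set" where
  "identify V E u v = (V - {v}, (\<lambda>e. (\<lambda>x. if x = v then u else x) ` e) ` E)"

inductive projection :: "'a set \<Rightarrow> 'a set set \<Rightarrow> 'a set \<Rightarrow> 'a set set \<Rightarrow> bool" where
  proj_refl: "projection V E V E"
| proj_del: "projection V E V' E' \<Longrightarrow> v \<in> V' \<Longrightarrow>
     projection V E (fst (del_vertex V' E' v)) (snd (del_vertex V' E' v))"
| proj_ident: "projection V E V' E' \<Longrightarrow> u \<in> V' \<Longrightarrow> v \<in> V' \<Longrightarrow> u \<noteq> v \<Longrightarrow>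
     \<not> adjacent E' u v \<Longrightarrow>
     projection V E (fst (identify V' E' u v)) (snd (identify V' E' u v))"

definition is_triangle :: "'a set \<Rightarrow> 'a set set \<Rightarrow> bool" where
  "is_triangle V E \<longleftrightarrow> card V = 3 \<and> E = {e. e \<subseteq> V \<and> card e = 2}"

text \<open>Non-isolated vertices are exactly those covered by edges.\<close>
definition complete_bipartite_edges :: "'a set set \<Rightarrow> bool" where
  "complete_bipartite_edges E \<longleftrightarrow>
     (\<exists>A B. A \<inter> B = {} \<and> A \<union> B = \<Union>E \<and> E = {{a, b} | a b. a \<in> A \<and> b \<in> B})"

text \<open>Trivial pattern: after removing isolated vertices (leaving the graph with vertex set
  \<Union>E and edge set E), it is complete bipartite or has at most two edges.\<close>
definition trivial_pattern :: "'a set \<Rightarrow> 'a set set \<Rightarrow> bool" where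
  "trivial_pattern V E \<longleftrightarrow> complete_bipartite_edges E \<or> card E \<le> 2"

end

theory Submission
  imports Defs
begin

(*
  If K3 is not a projection of H, then H contains no triangle and none of the following
  configurations, each of which projects onto a triangle after deleting all other vertices:
  a path a-b-c-d with a, d nonadjacent (identify a with d); a path a-b-c and an edge d-e with
  c, d and a, e nonadjacent (identifying c with d gives the path a-b-c-e); three edges ab, cd, ef
  with b, c and d, e and a, f nonadjacent (identifying b with c gives a path a-b-d and the edge e-f).
  With at least three edges this excludes an induced 2K2, so for any edge xy every non-isolated
  vertex is adjacent to x or to y. Triangle-freeness and the closing of paths a-b-c-d then make
  the neighbourhoods of y and of x the two sides of a complete bipartite graph.
*)

lemma projection_trans:
  assumes "projection V' E' V'' E''" and "projection V E V' E'"
  shows "projection V E V'' E''"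
  using assms by (induction rule: projection.induct) (auto intro: projection.intros)

lemma projection_delete_set:
  assumes "finite D" and "D \<subseteq> V'" and "projection V E V' E'"
  shows "projection V E (V' - D) {e \<in> E'. e \<inter> D = {}}"
  using assms
proof (induction D rule: finite_induct)
  case empty
  then show ?case by simp
next
  case (insert x D)
  then have "projection V E (V' - D) {e \<in> E'. e \<inter> D = {}}" and "x \<in> V' - D"
    by auto
  moreover have "del_vertex (V' - D) {e \<in> E'. e \<inter> D = {}} x
      = (V' - insert x D, {e \<in> E'. e \<inter> insert x D = {}})"
    by (auto simp: del_vertex_def)
  ultimately show ?case
    using projection.proj_del by fastforce
qed

lemma graph_edgeD:
  assumes "graph V E" and "{a, b} \<in> E"
  shows "a \<noteq> b" and "a \<in> V" and "b \<in> V"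
  using assms by (auto simp: graph_def card_insert_if split: if_splits)

lemma graph_finite_edges:
  assumes "graph V E"
  shows "finite E"
  using assms by (auto simp: graph_def intro: finite_subset[of E "Pow V"])

lemma graph_induced:
  assumes "graph V E" and "W \<subseteq> V"
  shows "graph W {e \<in> E. e \<subseteq> W}"
  using assms by (auto simp: graph_def intro: finite_subset)

lemma projection_induced:
  assumes "graph V E" and "W \<subseteq> V"
  shows "projection V E W {e \<in> E. e \<subseteq> W}"
proof -
  have "projection V E (V - (V - W)) {e \<in> E. e \<inter> (V - W) = {}}"
    using assms by (intro projection_delete_set projection.proj_refl) (auto simp: graph_def)
  moreover have "{e \<in> E. e \<inter> (V - W) = {}} = {e \<in> E. e \<subseteq> W}"
    using assms by (auto simp: graph_def)
  ultimately show ?thesis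
    using assms(2) by (simp add: double_diff)
qed

lemma graph_identify:
  assumes "graph V E" and "u \<in> V" and "u \<noteq> v" and "{u, v} \<notin> E"
  shows "graph (V - {v}) (snd (identify V E u v))"
proof -
  define f where "f = (\<lambda>x. if x = v then u else x)"
  have "f ` e \<subseteq> V - {v} \<and> card (f ` e) = 2" if e: "e \<in> E" for e
  proof -
    have "card e = 2" "e \<subseteq> V"
      using e assms(1) by (auto simp: graph_def)
    then obtain p q where pq: "e = {p, q}" "p \<noteq> q" "p \<in> V" "q \<in> V"
      by (metis card_2_iff insert_subset)
    have "{p, q} \<noteq> {u, v}"
      using assms(4) e pq(1) by auto
    then have "f p \<noteq> f q"
      using pq(2) by (auto simp: f_def doubleton_eq_iff)
    moreover have "f p \<in> V - {v}" "f q \<in> V - {v}"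
      using pq(3,4) assms(2,3) by (auto simp: f_def)
    ultimately show ?thesis
      using pq(1) by simp
  qed
  moreover have "finite (V - {v})"
    using assms(1) by (simp add: graph_def)
  ultimately show ?thesis
    unfolding graph_def identify_def snd_conv f_def [symmetric] by blast
qed

lemma edge_identify:
  assumes "{x, y} \<in> E" and "x \<noteq> v" and "y \<noteq> v"
  shows "{x, y} \<in> snd (identify V E u v)"
  unfolding identify_def snd_conv using assms by (intro image_eqI[of _ _ "{x, y}"]) auto

lemma edge_identify_merged:
  assumes "{x, v} \<in> E" and "x \<noteq> v"
  shows "{x, u} \<in> snd (identify V E u v)"
  unfolding identify_def snd_conv using assms by (intro image_eqI[of _ _ "{x, v}"]) auto

lemma non_edge_identify:
  assumes "{x, y} \<notin> E" and "x \<notin> {u, v}" and "y \<notin> {u, v}"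
  shows "{x, y} \<notin> snd (identify V E u v)"
proof
  assume "{x, y} \<in> snd (identify V E u v)"
  then obtain e where "e \<in> E" and e: "(\<lambda>z. if z = v then u else z) ` e = {x, y}"
    by (auto simp: identify_def)
  have "v \<notin> e"
  proof
    assume "v \<in> e"
    then have "(\<lambda>z. if z = v then u else z) v \<in> {x, y}"
      unfolding e [symmetric] by (rule imageI)
    with assms(2,3) show False
      by auto
  qed
  then have "(\<lambda>z. if z = v then u else z) ` e = e"
    by (auto simp: image_iff)
  with e \<open>e \<in> E\<close> assms(1) show False
    by simp
qed

definition projects_to_triangle :: "'a set \<Rightarrow> 'a set set \<Rightarrow> bool" where
  "projects_to_triangle V E \<longleftrightarrow> (\<exists>V' E'. projection V E V' E' \<and> is_triangle V' E')"

lemma projects_to_triangle_projection: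
  assumes "projection V E V' E'" and "projects_to_triangle V' E'"
  shows "projects_to_triangle V E"
  using assms projection_trans unfolding projects_to_triangle_def by blast

lemma projects_to_triangle_self:
  assumes "is_triangle V E"
  shows "projects_to_triangle V E"
  using assms projection.proj_refl unfolding projects_to_triangle_def by blast

lemma projects_to_triangle_induced:
  assumes "graph V E" and "W \<subseteq> V" and "projects_to_triangle W {e \<in> E. e \<subseteq> W}"
  shows "projects_to_triangle V E"
  using projects_to_triangle_projection projection_induced assms by blast

lemma projects_to_triangle_identify:
  assumes "u \<in> V" and "v \<in> V" and "u \<noteq> v" and "{u, v} \<notin> E"
    and "projects_to_triangle (V - {v}) (snd (identify V E u v))"
  shows "projects_to_triangle V E"
proof -
  have "projection V E (fst (identify V E u v)) (snd (identify V E u v))"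
    using assms(1-4) by (intro projection.proj_ident projection.proj_refl) (simp_all add: adjacent_def)
  then show ?thesis
    using assms(5) projects_to_triangle_projection by (fastforce simp: identify_def)
qed

lemma is_triangleI:
  assumes "graph {a, b, c} F" and "{a, b} \<in> F" and "{b, c} \<in> F" and "{a, c} \<in> F"
  shows "is_triangle {a, b, c} F"
proof -
  have "{e. e \<subseteq> {a, b, c} \<and> card e = 2} \<subseteq> F"
  proof clarify
    fix e assume "e \<subseteq> {a, b, c}" and "card e = 2"
    then obtain x y where "e = {x, y}" and "x \<noteq> y" and "x \<in> {a, b, c}" and "y \<in> {a, b, c}"
      by (metis card_2_iff insert_subset)
    then show "e \<in> F"
      using assms(2-4) by (auto simp: insert_commute)
  qed
  moreover have "card {a, b, c} = 3"
    using graph_edgeD(1)[OF assms(1)] assms(2-4) by auto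
  ultimately show ?thesis
    using assms(1) by (auto simp: is_triangle_def graph_def)
qed

lemma projects_to_triangle_triangle:
  assumes "graph V E" and "{a, b} \<in> E" and "{b, c} \<in> E" and "{a, c} \<in> E"
  shows "projects_to_triangle V E"
proof -
  let ?W = "{a, b, c}"
  have W: "?W \<subseteq> V"
    using graph_edgeD(2,3)[OF assms(1)] assms(2,3) by auto
  have "is_triangle ?W {e \<in> E. e \<subseteq> ?W}"
    by (rule is_triangleI) (use graph_induced[OF assms(1) W] assms(2-4) in auto)
  then show ?thesis
    using projects_to_triangle_induced[OF assms(1) W] projects_to_triangle_self by blast
qed

lemma projects_to_triangle_P4:
  assumes "graph V E" and "{a, b} \<in> E" and "{b, c} \<in> E" and "{c, d} \<in> E"
    and "a \<noteq> d" and "{a, d} \<notin> E"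
  shows "projects_to_triangle V E"
proof -
  let ?W = "{a, b, c, d}"
  let ?F = "{e \<in> E. e \<subseteq> ?W}"
  have W: "?W \<subseteq> V"
    using graph_edgeD(2,3)[OF assms(1)] assms(2,4) by auto
  have F: "graph ?W ?F"
    using assms(1) W by (rule graph_induced)
  have "b \<noteq> d" and "c \<noteq> d"
    using assms(2,6) graph_edgeD(1)[OF assms(1,4)] by auto
  then have W_d: "?W - {d} = {a, b, c}"
    using assms(5) by auto
  have "is_triangle {a, b, c} (snd (identify ?W ?F a d))"
  proof (rule is_triangleI)
    show "graph {a, b, c} (snd (identify ?W ?F a d))"
      using graph_identify[OF F, of a d] W_d assms(5,6) by simp
    show "{a, b} \<in> snd (identify ?W ?F a d)" and "{b, c} \<in> snd (identify ?W ?F a d)"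
      using assms(2,3,5) \<open>b \<noteq> d\<close> \<open>c \<noteq> d\<close> by (auto intro: edge_identify)
    have "{c, a} \<in> snd (identify ?W ?F a d)"
      using assms(4) \<open>c \<noteq> d\<close> by (auto intro: edge_identify_merged)
    then show "{a, c} \<in> snd (identify ?W ?F a d)"
      by (simp add: insert_commute)
  qed
  then have "projects_to_triangle ?W ?F"
    using assms(5,6) W_d by (intro projects_to_triangle_identify[of a ?W d] projects_to_triangle_self) auto
  then show ?thesis
    by (rule projects_to_triangle_induced[OF assms(1) W])
qed

lemma projects_to_triangle_P3_K2:
  assumes "graph V E" and "distinct [a, b, c, d, e]"
    and "{a, b} \<in> E" and "{b, c} \<in> E" and "{d, e} \<in> E"
    and "{c, d} \<notin> E" and "{a, e} \<notin> E"
  shows "projects_to_triangle V E"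
proof -
  let ?E' = "snd (identify V E c d)"
  have "c \<in> V" and "d \<in> V"
    using graph_edgeD(2,3)[OF assms(1)] assms(4,5) by auto
  moreover have "projects_to_triangle (V - {d}) ?E'"
  proof (rule projects_to_triangle_P4)
    show "graph (V - {d}) ?E'"
      using assms(2,6) \<open>c \<in> V\<close> by (intro graph_identify[OF assms(1)]) auto
    show "{a, b} \<in> ?E'" and "{b, c} \<in> ?E'"
      using assms(2-4) by (auto intro: edge_identify)
    have "{e, c} \<in> ?E'"
      using assms(2,5) by (intro edge_identify_merged) (auto simp: insert_commute)
    then show "{c, e} \<in> ?E'"
      by (simp add: insert_commute)
    show "a \<noteq> e"
      using assms(2) by simp
    show "{a, e} \<notin> ?E'"
      using assms(2) by (intro non_edge_identify[OF assms(7)]) auto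
  qed
  ultimately show ?thesis
    using assms(2,6) by (intro projects_to_triangle_identify[of c V d]) auto
qed

lemma projects_to_triangle_3K2:
  assumes "graph V E" and "distinct [a, b, c, d, e, f]"
    and "{a, b} \<in> E" and "{c, d} \<in> E" and "{e, f} \<in> E"
    and "{b, c} \<notin> E" and "{d, e} \<notin> E" and "{a, f} \<notin> E"
  shows "projects_to_triangle V E"
proof -
  let ?E' = "snd (identify V E b c)"
  have "b \<in> V" and "c \<in> V"
    using graph_edgeD(2,3)[OF assms(1)] assms(3,4) by auto
  moreover have "projects_to_triangle (V - {c}) ?E'"
  proof (rule projects_to_triangle_P3_K2)
    show "graph (V - {c}) ?E'"
      using assms(2,6) \<open>b \<in> V\<close> by (intro graph_identify[OF assms(1)]) auto
    show "distinct [a, b, d, e, f]"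
      using assms(2) by auto
    show "{a, b} \<in> ?E'" and "{e, f} \<in> ?E'"
      using assms(2,3,5) by (auto intro: edge_identify)
    have "{d, b} \<in> ?E'"
      using assms(2,4) by (intro edge_identify_merged) (auto simp: insert_commute)
    then show "{b, d} \<in> ?E'"
      by (simp add: insert_commute)
    show "{d, e} \<notin> ?E'"
      using assms(2) by (intro non_edge_identify[OF assms(7)]) auto
    show "{a, f} \<notin> ?E'"
      using assms(2) by (intro non_edge_identify[OF assms(8)]) auto
  qed
  ultimately show ?thesis
    using assms(2,6) by (intro projects_to_triangle_identify[of b V c]) auto
qed

locale triangle_projection_free =
  fixes E :: "'a set set"
  assumes card_edge: "uv \<in> E \<Longrightarrow> card uv = 2"
    and triangle_free: "{a, b} \<in> E \<Longrightarrow> {b, c} \<in> E \<Longrightarrow> {a, c} \<notin> E"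
    and chord_P4: "{a, b} \<in> E \<Longrightarrow> {b, c} \<in> E \<Longrightarrow> {c, d} \<in> E \<Longrightarrow> a \<noteq> d \<Longrightarrow> {a, d} \<in> E"
    and chord_P3_K2: "distinct [a, b, c, d, e] \<Longrightarrow> {a, b} \<in> E \<Longrightarrow> {b, c} \<in> E \<Longrightarrow> {d, e} \<in> E \<Longrightarrow>
      {c, d} \<notin> E \<Longrightarrow> {a, e} \<in> E"
    and chord_3K2: "distinct [a, b, c, d, e, f] \<Longrightarrow> {a, b} \<in> E \<Longrightarrow> {c, d} \<in> E \<Longrightarrow> {e, f} \<in> E \<Longrightarrow>
      {b, c} \<notin> E \<Longrightarrow> {d, e} \<notin> E \<Longrightarrow> {a, f} \<in> E"

lemma triangle_projection_free_if_not_projects_to_triangle: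
  assumes "graph V E" and "\<not> projects_to_triangle V E"
  shows "triangle_projection_free E"
proof
  show "card e = 2" if "e \<in> E" for e
    using assms(1) that by (simp add: graph_def)
  show "{a, c} \<notin> E" if "{a, b} \<in> E" and "{b, c} \<in> E" for a b c
    using projects_to_triangle_triangle[OF assms(1) that] assms(2) by blast
  show "{a, d} \<in> E" if "{a, b} \<in> E" and "{b, c} \<in> E" and "{c, d} \<in> E" and "a \<noteq> d" for a b c d
    using projects_to_triangle_P4[OF assms(1) that] assms(2) by blast
  show "{a, e} \<in> E" if "distinct [a, b, c, d, e]" and "{a, b} \<in> E" and "{b, c} \<in> E"
    and "{d, e} \<in> E" and "{c, d} \<notin> E" for a b c d e
    using projects_to_triangle_P3_K2[OF assms(1) that] assms(2) by blast
  show "{a, f} \<in> E" if "distinct [a, b, c, d, e, f]" and "{a, b} \<in> E" and "{c, d} \<in> E"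
    and "{e, f} \<in> E" and "{b, c} \<notin> E" and "{d, e} \<notin> E" for a b c d e f
    using projects_to_triangle_3K2[OF assms(1) that] assms(2) by blast
qed

definition induced_2K2 :: "'a set set \<Rightarrow> 'a \<Rightarrow> 'a \<Rightarrow> 'a \<Rightarrow> 'a \<Rightarrow> bool" where
  "induced_2K2 E x y z w \<longleftrightarrow>
     {x, y} \<in> E \<and> {z, w} \<in> E \<and> {x, z} \<notin> E \<and> {x, w} \<notin> E \<and> {y, z} \<notin> E \<and> {y, w} \<notin> E"

lemma induced_2K2_swap:
  assumes "induced_2K2 E x y z w"
  shows "induced_2K2 E y x z w" and "induced_2K2 E z w x y"
  using assms by (auto simp: induced_2K2_def insert_commute)

context triangle_projection_free
begin

lemma edge_neq:
  assumes "{a, b} \<in> E"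
  shows "a \<noteq> b"
  using card_edge[OF assms] by auto

lemma induced_2K2_distinct:
  assumes "induced_2K2 E x y z w"
  shows "distinct [x, y, z, w]"
  using assms edge_neq unfolding induced_2K2_def by (auto simp: insert_commute)

lemma induced_2K2_neighbour:
  assumes "induced_2K2 E x y z w" and "{q, x} \<in> E"
  shows "q = y"
proof (rule ccontr)
  assume "q \<noteq> y"
  have I: "{x, y} \<in> E" "{z, w} \<in> E" "{x, z} \<notin> E" "{x, w} \<notin> E" "{y, z} \<notin> E" "{y, w} \<notin> E"
    using assms(1) by (auto simp: induced_2K2_def)
  have "distinct [q, x, y, z, w]"
    using induced_2K2_distinct[OF assms(1)] edge_neq[OF assms(2)] \<open>q \<noteq> y\<close> assms(2) I(3,4)
    by (auto simp: insert_commute)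
  then have "{q, w} \<in> E"
    using chord_P3_K2 assms(2) I(1,2,5) by blast
  then have "{y, w} \<in> E"
    using chord_P4[of y x q w] I(1) assms(2) induced_2K2_distinct[OF assms(1)] by (simp add: insert_commute)
  with I(6) show False ..
qed

lemma no_induced_2K2:
  assumes "finite E" and "2 < card E"
  shows "\<not> induced_2K2 E x y z w"
proof
  assume I: "induced_2K2 E x y z w"
  have nbr_x: "s = y" if "{s, x} \<in> E" for s
    using induced_2K2_neighbour[OF I that] .
  have nbr_y: "s = x" if "{s, y} \<in> E" for s
    using induced_2K2_neighbour[OF induced_2K2_swap(1)[OF I] that] .
  have nbr_z: "s = w" if "{s, z} \<in> E" for s
    using induced_2K2_neighbour[OF induced_2K2_swap(2)[OF I] that] .
  have nbr_w: "s = z" if "{s, w} \<in> E" for s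
    using induced_2K2_neighbour[OF induced_2K2_swap(1)[OF induced_2K2_swap(2)[OF I]] that] .
  have "\<not> E \<subseteq> {{x, y}, {z, w}}"
  proof
    assume "E \<subseteq> {{x, y}, {z, w}}"
    then have "card E \<le> card {{x, y}, {z, w}}"
      by (simp add: card_mono)
    also have "\<dots> \<le> 2"
      by (simp add: card_insert_if)
    finally show False
      using assms(2) by simp
  qed
  then obtain g where g: "g \<in> E" "g \<noteq> {x, y}" "g \<noteq> {z, w}"
    by blast
  then obtain p q where pq: "g = {p, q}" "p \<noteq> q"
    using card_edge by (meson card_2_iff)
  have edge_at: "{r, s} = {x, y} \<or> {r, s} = {z, w}" if "{r, s} \<in> E" and "r \<in> {x, y, z, w}" for r s
  proof -
    have "{s, r} \<in> E"
      using that(1) by (simp add: insert_commute)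
    with that(2) nbr_x nbr_y nbr_z nbr_w show ?thesis
      by (auto simp: doubleton_eq_iff)
  qed
  have outside: "p \<notin> {x, y, z, w}" "q \<notin> {x, y, z, w}"
    using edge_at[of p q] edge_at[of q p] g pq(1) by (auto simp: insert_commute)
  have "{x, p} \<notin> E" and "{q, z} \<notin> E"
    using outside nbr_x[of p] nbr_z[of q] by (auto simp: insert_commute)
  moreover have "distinct [y, x, p, q, z, w]"
    using induced_2K2_distinct[OF I] outside pq(2) by auto
  moreover have "{y, x} \<in> E" and "{z, w} \<in> E"
    using I by (simp_all add: induced_2K2_def insert_commute)
  ultimately have "{y, w} \<in> E"
    using chord_3K2[of y x p q z w] g(1) pq(1) by blast
  with I show False
    by (simp add: induced_2K2_def)
qed

lemma adjacent_to_edge: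
  assumes "finite E" and "2 < card E" and "{x, y} \<in> E" and "{v, u} \<in> E"
  shows "{v, x} \<in> E \<or> {v, y} \<in> E"
proof (cases "{u, v} \<inter> {x, y} = {}")
  case True
  then have "{x, v} \<in> E \<or> {x, u} \<in> E \<or> {y, v} \<in> E \<or> {y, u} \<in> E"
    using no_induced_2K2[OF assms(1,2)] assms(3,4) unfolding induced_2K2_def by blast
  then show ?thesis
    using True chord_P4[of v u x y] chord_P4[of v u y x] assms(3,4) by (auto simp: insert_commute)
next
  case False
  then show ?thesis
    using assms(3,4) by (auto simp: insert_commute)
qed

theorem complete_bipartite:
  assumes "finite E" and "2 < card E"
  shows "complete_bipartite_edges E"
proof -
  obtain g where "g \<in> E"
    using assms(2) by fastforce
  then obtain x y where xy: "{x, y} \<in> E"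
    using card_edge by (metis card_2_iff)
  define A where "A = {v. {v, y} \<in> E}"
  define B where "B = {v. {v, x} \<in> E}"
  have vertex_edge: "\<exists>u. {v, u} \<in> E" if "v \<in> \<Union>E" for v
    using that card_edge by (fastforce simp: card_2_iff insert_commute)
  have disjoint: "A \<inter> B = {}"
    using triangle_free xy by (fastforce simp: A_def B_def insert_commute)
  have cover: "A \<union> B = \<Union>E"
  proof
    show "A \<union> B \<subseteq> \<Union>E"
      by (auto simp: A_def B_def)
    show "\<Union>E \<subseteq> A \<union> B"
    proof
      fix v assume "v \<in> \<Union>E"
      then obtain u where "{v, u} \<in> E"
        using vertex_edge by blast
      then show "v \<in> A \<union> B"
        using adjacent_to_edge[OF assms xy] by (auto simp: A_def B_def)
    qed
  qed
  have "E = {{a, b} | a b. a \<in> A \<and> b \<in> B}"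
  proof (intro equalityI subsetI)
    fix g assume "g \<in> E"
    then obtain p q where pq: "g = {p, q}"
      using card_edge by (meson card_2_iff)
    have "p \<in> A \<union> B" "q \<in> A \<union> B"
      using cover \<open>g \<in> E\<close> pq by auto
    moreover have "\<not> (p \<in> A \<and> q \<in> A)" "\<not> (p \<in> B \<and> q \<in> B)"
      using triangle_free \<open>g \<in> E\<close> pq by (auto simp: A_def B_def insert_commute)
    ultimately show "g \<in> {{a, b} | a b. a \<in> A \<and> b \<in> B}"
      using pq by (auto simp: insert_commute)
  next
    fix g assume "g \<in> {{a, b} | a b. a \<in> A \<and> b \<in> B}"
    then obtain a b where "g = {a, b}" "a \<in> A" "b \<in> B"
      by blast
    moreover have "a \<noteq> b"
      using disjoint calculation by auto
    ultimately show "g \<in> E"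
      using chord_P4[of a y x b] xy by (simp add: A_def B_def insert_commute)
  qed
  with disjoint cover show ?thesis
    unfolding complete_bipartite_edges_def by blast
qed

end

theorem lemma1p13:
  fixes V :: "'a set" and E :: "'a set set"
  assumes "graph V E"
    and "\<not> trivial_pattern V E"
  shows "\<exists>V' E'. projection V E V' E' \<and> is_triangle V' E'"
proof (rule ccontr)
  assume "\<not> ?thesis"
  then have "\<not> projects_to_triangle V E"
    by (simp add: projects_to_triangle_def)
  then interpret triangle_projection_free E
    by (rule triangle_projection_free_if_not_projects_to_triangle[OF assms(1)])
  have "complete_bipartite_edges E"
    using assms(2) graph_finite_edges[OF assms(1)]
    by (intro complete_bipartite) (auto simp: trivial_pattern_def)
  with assms(2) show False
    by (simp add: trivial_pattern_def)
qed

end
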